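(* Let $\mathbf{p},\mathbf{q},\lambda,\mu,\bar d,\bar w$, $q\in(0,1)$, the random variable $X$ and the quantities $p^{(E)}$ be as in the context. Let $0<x\le\bar d\bar w$ and let $\sigma_x=\big((w_i,x_{i1},\dots,x_{i\ell_i})\big)_{1\le i\le d-1}$ be a configuration starting from $x$ that occurs with positive probability. Let $(y_{ij})_{1\le i\le d-1,\,1\le j\le\ell_i}$ be integers such that $y_{ij}\le x_{ij}$ and $\mathbb{P}(X=y_{ij})>0$ for all $i,j$. Let $\sigma'_x=\big((w_i,y'_{i1},\dots,y'_{i\ell_i})\big)_{1\le i\le d-1}$, where for each $i$, $(y'_{i1}\le\dots\le y'_{i\ell_i})$ is the nondecreasing rearrangement of $(y_{i1},\dots,y_{i\ell_i})$. Then $\sigma'_x$ is a configuration starting from $x$ that occurs with positive probability.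
   Context: Standing assumptions: $\mathbf{p}=(p_d)_{d\ge0}$, $\mathbf{q}=(q_w)_{w\ge0}$ are probability distributions on nonnegative integers with $\lambda=\sum_d dp_d\in(0,\infty)$, $\mu=\sum_w wq_w\in(0,\infty)$, $p_d=0$ for $d>\bar d$, $q_w=0$ for $w>\bar w$ (integers $\bar d,\bar w\ge1$), $p_0=q_0=q_1=0$. $X$ is the random variable with $\mathbb{P}(X=k)=\sum_{d=1}^{\bar d}\frac{dp_d}{\lambda}\sum_{(w_1-1)+\dots+(w_{d-1}-1)=k}\frac{\prod_{j=1}^{d-1}w_jq_{w_j}}{\mu^{d-1}}$ (sum over positive integers $w_j$). $p^{(E)}(\ell,x_1,\dots,x_\ell\mid w)=\mathbb{P}(L=\ell,X_{(1)}=x_1,\dots,X_{(\ell)}=x_\ell)$ for $0\le\ell\le w-1$, $x_1\le\dots\le x_\ell$, where: a clique of size $w$ has an initially active vertex $u$ and initially inactive vertices $1,\dots,w-1$; vertex $i$ has $X_i$ further neighbors outside the clique which are inactive and remain inactive (so its degree is $X_i+w-1$), with $X_1,\dots,X_{w-1}$ i.i.d. copies of $X$; in discrete time an inactive vertex becomes active once its proportion of active neighbors is strictly greater than $q$, active vertices staying active; $L$ is the final number of active vertices among $1,\dots,w-1$, and $X_{(1)}\le\dots\le X_{(w-1)}$ the order statistics of the $X_i$. A configuration starting from $x$ is an element $\sigma_x=\big((w_i,x_{i1},\dots,x_{i\ell_i})\big)_{1\le i\le d-1}$ with $1\le d\le\bar d$, $2\le w_i\le\bar w$, $0\le\ell_i\le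 w_i-1$ and $0\le x_{i1}\le\dots\le x_{i\ell_i}\le\bar d\bar w$. It occurs with positive probability if $p_d>0$, $\sum_{i=1}^{d-1}(w_i-1)=x$, and $q_{w_i}>0$ and $p^{(E)}(\ell_i,x_{i1},\dots,x_{i\ell_i}\mid w_i)>0$ for all $1\le i\le d-1$. *)

theory Defs
  imports "HOL-Analysis.Analysis"
begin

definition lam :: "(nat \<Rightarrow> real) \<Rightarrow> real" where
  "lam p = (\<Sum>d. real d * p d)"

definition mu :: "(nat \<Rightarrow> real) \<Rightarrow> real" where
  "mu q = (\<Sum>w. real w * q w)"

text \<open>P(X = k): sum over d = 1..dbar, and over tuples (w_1,...,w_{d-1}) of positive
  integers with (w_1-1)+...+(w_{d-1}-1) = k (necessarily each w_j \<le> k+1).\<close>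
definition pX :: "(nat \<Rightarrow> real) \<Rightarrow> (nat \<Rightarrow> real) \<Rightarrow> nat \<Rightarrow> nat \<Rightarrow> real" where
  "pX p q dbar k =
     (\<Sum>d\<in>{1..dbar}. real d * p d / lam p *
        (\<Sum>ws\<in>{ws. length ws = d - 1 \<and> (\<forall>w\<in>set ws. 1 \<le> w \<and> w \<le> k + 1)
                    \<and> (\<Sum>w\<leftarrow>ws. w - 1) = k}.
           (\<Prod>w\<leftarrow>ws. real w * q w) / mu q ^ (d - 1)))"

text \<open>The clique vertices 1..w-1 are the list positions 0..<length xs (length xs = w-1);
  vertex i has degree xs!i + (w-1) = xs!i + length xs; its active neighbours are u
  and the active clique vertices other than i; all outside neighbours stay inactive.\<close>
definition clique_step :: "real \<Rightarrow> nat list \<Rightarrow> nat set \<Rightarrow> nat set" where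
  "clique_step thr xs A =
     A \<union> {i. i < length xs \<and>
              real (1 + card (A - {i})) / real (xs ! i + length xs) > thr}"

text \<open>Final set of active clique vertices (initially only u is active).\<close>
definition clique_final :: "real \<Rightarrow> nat list \<Rightarrow> nat set" where
  "clique_final thr xs = (\<Union>n. (clique_step thr xs ^^ n) {})"

text \<open>p^(E)(l, ys | w) = P(L = l, X_(1) = ys!0, ..., X_(l) = ys!(l-1)), with
  X_1..X_{w-1} i.i.d. copies of X.\<close>
definition pE :: "real \<Rightarrow> (nat \<Rightarrow> real) \<Rightarrow> (nat \<Rightarrow> real) \<Rightarrow> nat
                   \<Rightarrow> nat \<Rightarrow> nat list \<Rightarrow> nat \<Rightarrow> real" where
  "pE thr p q dbar l ys w =
     infsum (\<lambda>xs. (\<Prod>x\<leftarrow>xs. pX p q dbar x) *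
                  (if card (clique_final thr xs) = l \<and> take l (sort xs) = ys then 1 else 0))
            {xs. length xs = w - 1}"

text \<open>A configuration is a list of length d-1 of entries (w_i, [x_i1,...,x_il_i]);
  d = length cs + 1.\<close>
definition is_config :: "nat \<Rightarrow> nat \<Rightarrow> (nat \<times> nat list) list \<Rightarrow> bool" where
  "is_config dbar wbar cs \<longleftrightarrow>
     1 \<le> length cs + 1 \<and> length cs + 1 \<le> dbar \<and>
     (\<forall>(w, xs)\<in>set cs. 2 \<le> w \<and> w \<le> wbar \<and> length xs \<le> w - 1 \<and> sorted xs \<and>
                       (\<forall>x\<in>set xs. x \<le> dbar * wbar))"

definition config_pos ::
  "real \<Rightarrow> (nat \<Rightarrow> real) \<Rightarrow> (nat \<Rightarrow> real) \<Rightarrow> nat \<Rightarrow> nat \<Rightarrow> (nat \<times> nat list) list \<Rightarrow> bool" where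
  "config_pos thr p q dbar x cs \<longleftrightarrow>
     p (length cs + 1) > 0 \<and> (\<Sum>(w, xs)\<leftarrow>cs. w - 1) = x \<and>
     (\<forall>(w, xs)\<in>set cs. q w > 0 \<and> pE thr p q dbar (length xs) xs w > 0)"

end

theory Submission
  imports Defs "HOL-Combinatorics.Permutations"
begin

text \<open>Only the recorded outside degrees change, so the point is that positivity of
  p^(E)(l, xs | w) survives lowering xs pointwise. Positivity means that some list of outside
  degrees of positive probability yields l active clique vertices whose sorted degrees start with
  xs. The dynamics activates vertices in order of increasing outside degree, so in the sorted
  witness exactly the first l entries become active; replacing them by the sorted smaller values
  gives a witness for the new degrees.\<close>

abbreviation clique_iter :: "real \<Rightarrow> nat list \<Rightarrow> nat \<Rightarrow> nat set" where
  "clique_iter thr xs k \<equiv> (clique_step thr xs ^^ k) {}"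

lemma clique_step_subset:
  "A \<subseteq> {..<length xs} \<Longrightarrow> clique_step thr xs A \<subseteq> {..<length xs}"
  unfolding clique_step_def by auto

lemma clique_iter_subset: "clique_iter thr xs k \<subseteq> {..<length xs}"
  by (induction k) (simp_all add: clique_step_subset)

lemma finite_clique_iter: "finite (clique_iter thr xs k)"
  using clique_iter_subset by (rule finite_subset) simp

lemma clique_final_subset: "clique_final thr xs \<subseteq> {..<length xs}"
  unfolding clique_final_def using clique_iter_subset by blast

lemma finite_clique_final: "finite (clique_final thr xs)"
  using clique_final_subset by (rule finite_subset) simp

lemma clique_step_mono:
  assumes "A \<subseteq> B" "finite B" "length ys = length xs" "\<forall>i<length xs. ys ! i \<le> xs ! i"
  shows "clique_step thr xs A \<subseteq> clique_step thr ys B"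
proof
  fix i assume "i \<in> clique_step thr xs A"
  then consider "i \<in> A"
    | "i < length xs" "thr < real (1 + card (A - {i})) / real (xs ! i + length xs)"
    unfolding clique_step_def by blast
  then show "i \<in> clique_step thr ys B"
  proof cases
    case 1 then show ?thesis using assms(1) unfolding clique_step_def by blast
  next
    case 2
    have "card (A - {i}) \<le> card (B - {i})" using assms(1,2) by (intro card_mono) auto
    then have "real (1 + card (A - {i})) / real (xs ! i + length xs)
        \<le> real (1 + card (B - {i})) / real (xs ! i + length xs)"
      by (intro divide_right_mono) auto
    also have "\<dots> \<le> real (1 + card (B - {i})) / real (ys ! i + length ys)"
      using assms(3,4) 2 by (intro divide_left_mono) auto
    finally have "thr < real (1 + card (B - {i})) / real (ys ! i + length ys)"
      using 2(2) by linarith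
    then show ?thesis using 2(1) assms(3) unfolding clique_step_def by simp
  qed
qed

lemma clique_iter_antimono:
  assumes "length ys = length xs" "\<forall>i<length xs. ys ! i \<le> xs ! i"
  shows "clique_iter thr xs k \<subseteq> clique_iter thr ys k"
proof (induction k)
  case (Suc k)
  show ?case using clique_step_mono[OF Suc finite_clique_iter assms] by simp
qed simp

lemma clique_final_antimono:
  assumes "length ys = length xs" "\<forall>i<length xs. ys ! i \<le> xs ! i"
  shows "clique_final thr xs \<subseteq> clique_final thr ys"
  unfolding clique_final_def using clique_iter_antimono[OF assms] by blast

lemma clique_iter_mono: "k \<le> m \<Longrightarrow> clique_iter thr xs k \<subseteq> clique_iter thr xs m"
proof -
  have "clique_iter thr xs k \<subseteq> clique_iter thr xs (Suc k)" for k
  proof (induction k)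
    case (Suc k)
    show ?case using clique_step_mono[OF Suc finite_clique_iter refl] by simp
  qed simp
  then show "k \<le> m \<Longrightarrow> ?thesis" by (rule lift_Suc_mono_le)
qed

lemma clique_final_eq_iter: "\<exists>K. clique_final thr xs = clique_iter thr xs K"
proof -
  let ?F = "clique_final thr xs"
  obtain k where k: "\<forall>i\<in>?F. i \<in> clique_iter thr xs (k i)"
    unfolding clique_final_def by (metis UN_E)
  define K where "K = Max (k ` ?F)"
  have "?F \<subseteq> clique_iter thr xs K"
  proof
    fix i assume i: "i \<in> ?F"
    then have "k i \<le> K" unfolding K_def using finite_clique_final by auto
    then show "i \<in> clique_iter thr xs K" using clique_iter_mono k i by blast
  qed
  moreover have "clique_iter thr xs K \<subseteq> ?F" unfolding clique_final_def by blast
  ultimately show ?thesis by blast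
qed

lemma clique_step_final: "clique_step thr xs (clique_final thr xs) \<subseteq> clique_final thr xs"
proof -
  obtain K where "clique_final thr xs = clique_iter thr xs K"
    using clique_final_eq_iter by blast
  moreover have "clique_iter thr xs (Suc K) \<subseteq> clique_final thr xs"
    unfolding clique_final_def by blast
  ultimately show ?thesis by simp
qed

lemma clique_final_least:
  assumes "B \<subseteq> {..<length xs}" "clique_step thr xs B \<subseteq> B"
  shows "clique_final thr xs \<subseteq> B"
proof -
  have "finite B" using assms(1) by (rule finite_subset) simp
  have "clique_iter thr xs k \<subseteq> B" for k
  proof (induction k)
    case (Suc k)
    have "clique_step thr xs (clique_iter thr xs k) \<subseteq> clique_step thr xs B"
      using Suc \<open>finite B\<close> by (intro clique_step_mono) simp_all
    then show ?case using assms by auto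
  qed simp
  then show ?thesis unfolding clique_final_def by blast
qed

text \<open>At the step where the eventually active vertex i switches on, every inactive vertex j
  sees the same active set and, if it had no more outside neighbours, would switch on too.\<close>
lemma clique_final_less:
  assumes thr: "thr > 0" and i: "i \<in> clique_final thr xs"
    and j: "j < length xs" "j \<notin> clique_final thr xs"
  shows "xs ! i < xs ! j"
proof (rule ccontr)
  assume "\<not> xs ! i < xs ! j"
  then have le: "xs ! j \<le> xs ! i" by simp
  have ex: "\<exists>k. i \<in> clique_iter thr xs k" using i unfolding clique_final_def by blast
  define k0 where "k0 = (LEAST k. i \<in> clique_iter thr xs k)"
  have k0: "i \<in> clique_iter thr xs k0" unfolding k0_def using ex by (rule LeastI_ex)
  then obtain m where m: "k0 = Suc m" by (cases k0) auto
  have "i \<notin> clique_iter thr xs m"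
    using not_less_Least[of m "\<lambda>k. i \<in> clique_iter thr xs k"] m k0_def by auto
  let ?A = "clique_iter thr xs m"
  have act: "i < length xs" "thr < real (1 + card (?A - {i})) / real (xs ! i + length xs)"
    using k0 \<open>i \<notin> ?A\<close> m by (simp_all add: clique_step_def)
  have "j \<notin> ?A" using j unfolding clique_final_def by blast
  then have same: "card (?A - {j}) = card (?A - {i})" using \<open>i \<notin> ?A\<close> by simp
  have "real (xs ! i + length xs) > 0"
    using act thr by (cases "xs ! i + length xs = 0") auto
  then have "real (1 + card (?A - {i})) / real (xs ! i + length xs)
        \<le> real (1 + card (?A - {j})) / real (xs ! j + length xs)"
    unfolding same using le j by (intro divide_left_mono) auto
  then have "j \<in> clique_iter thr xs (Suc m)" using act j by (simp add: clique_step_def)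
  then show False using j unfolding clique_final_def by blast
qed

lemma clique_step_permute_list:
  assumes f: "f permutes {..<length xs}"
  shows "clique_step thr (permute_list f xs) (f -` A) = f -` clique_step thr xs A"
proof (rule set_eqI)
  fix i
  have "bij f" using f by (rule permutes_bij)
  have "f -` A - {i} = f -` (A - {f i})"
    by (auto simp: inj_eq[OF bij_is_inj[OF \<open>bij f\<close>]])
  then have card: "card (f -` A - {i}) = card (A - {f i})"
    using \<open>bij f\<close> by (simp add: card_vimage_inj bij_is_inj bij_is_surj)
  have "i < length xs \<longleftrightarrow> f i < length xs"
    using permutes_in_image[OF f] by simp
  then show "i \<in> clique_step thr (permute_list f xs) (f -` A) \<longleftrightarrow> i \<in> f -` clique_step thr xs A"
    unfolding clique_step_def vimage_Un vimage_Collect_eq Un_iff mem_Collect_eq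
      length_permute_list card
    using permute_list_nth[OF f, of i] by auto
qed

lemma clique_iter_permute_list:
  assumes "f permutes {..<length xs}"
  shows "clique_iter thr (permute_list f xs) k = f -` clique_iter thr xs k"
proof (induction k)
  case (Suc k)
  then show ?case
    using clique_step_permute_list[OF assms] by simp
qed simp

lemma card_clique_final_permute_list:
  assumes f: "f permutes {..<length xs}"
  shows "card (clique_final thr (permute_list f xs)) = card (clique_final thr xs)"
proof -
  have "clique_final thr (permute_list f xs) = f -` clique_final thr xs"
    unfolding clique_final_def vimage_UN clique_iter_permute_list[OF f] ..
  moreover have "bij f" using f by (rule permutes_bij)
  ultimately show ?thesis by (simp add: card_vimage_inj bij_is_inj bij_is_surj)
qed

lemma clique_final_sorted:
  assumes thr: "thr > 0" and s: "sorted s"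
  shows "clique_final thr s = {..<card (clique_final thr s)}"
proof -
  let ?F = "clique_final thr s"
  have down: "i \<in> ?F" if "j \<in> ?F" "i \<le> j" for i j
  proof (rule ccontr)
    assume "i \<notin> ?F"
    moreover have "j < length s" using that(1) clique_final_subset[of thr s] by auto
    ultimately have "s ! j < s ! i" using clique_final_less[OF thr \<open>j \<in> ?F\<close>] that by simp
    moreover have "s ! i \<le> s ! j" using s that \<open>j < length s\<close> by (simp add: sorted_nth_mono)
    ultimately show False by linarith
  qed
  have "?F \<subseteq> {..<card ?F}"
  proof
    fix i assume "i \<in> ?F"
    then have "{..i} \<subseteq> ?F" using down by auto
    then have "card {..i} \<le> card ?F" by (intro card_mono finite_clique_final)
    then show "i \<in> {..<card ?F}" by simp
  qed
  then show ?thesis by (intro card_subset_eq) simp_all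
qed

text \<open>The active set can only grow by monotonicity, and the old one stays closed under a
  step because the inactive entries are unchanged.\<close>
lemma clique_final_lower_prefix:
  assumes thr: "thr > 0" and s: "sorted s" and l: "card (clique_final thr s) = l"
    and sy: "sorted sy" "length sy = l" "\<forall>j<l. sy ! j \<le> s ! j"
  shows "sorted (sy @ drop l s)" and "clique_final thr (sy @ drop l s) = {..<l}"
proof -
  let ?F = "clique_final thr s" and ?zs = "sy @ drop l s"
  have F: "?F = {..<l}" using clique_final_sorted[OF thr s] l by simp
  have "l \<le> length s" using clique_final_subset[of thr s] unfolding F by auto
  then have len: "length ?zs = length s" using sy(2) by simp
  have lo: "?zs ! i = sy ! i" if "i < l" for i
    using that sy(2) by (simp add: nth_append)
  have hi: "?zs ! i = s ! i" if "l \<le> i" for i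
    using that sy(2) \<open>l \<le> length s\<close> by (simp add: nth_append)
  have "\<forall>i<length s. ?zs ! i \<le> s ! i"
  proof (intro allI impI)
    fix i show "?zs ! i \<le> s ! i"
      using lo hi sy(3) by (cases "i < l") simp_all
  qed
  then have grow: "?F \<subseteq> clique_final thr ?zs" using len by (intro clique_final_antimono)
  have closed: "clique_step thr ?zs ?F \<subseteq> ?F"
  proof
    fix i assume i: "i \<in> clique_step thr ?zs ?F"
    show "i \<in> ?F"
    proof (rule ccontr)
      assume "i \<notin> ?F"
      then have "i < length s" "thr < real (1 + card (?F - {i})) / real (?zs ! i + length s)"
        using i unfolding clique_step_def len by auto
      moreover have "l \<le> i" using \<open>i \<notin> ?F\<close> unfolding F by simp
      ultimately have "i \<in> clique_step thr s ?F"
        using hi unfolding clique_step_def by simp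
      then show False using clique_step_final[of thr s] \<open>i \<notin> ?F\<close> by blast
    qed
  qed
  have "?F \<subseteq> {..<length ?zs}" using clique_final_subset[of thr s] len by simp
  then have "clique_final thr ?zs \<subseteq> ?F" using closed by (rule clique_final_least)
  then show "clique_final thr ?zs = {..<l}" using grow F by blast
  show "sorted ?zs"
    unfolding sorted_append
  proof (intro conjI ballI)
    show "sorted (drop l s)" using s by (rule sorted_wrt_drop)
    fix a b assume "a \<in> set sy" "b \<in> set (drop l s)"
    then obtain j k where "j < l" "a = sy ! j" "k < length s - l" "b = s ! (l + k)"
      using sy(2) \<open>l \<le> length s\<close> by (auto simp: in_set_conv_nth)
    then have "a \<le> s ! j" "s ! j \<le> b" using sy(3) s by (simp_all add: sorted_nth_mono)
    then show "a \<le> b" by (rule order.trans)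
  qed (rule sy)
qed

lemma sort_nth_le:
  fixes a b :: "'a::linorder list"
  assumes len: "length a = length b" and b: "sorted b" and le: "\<forall>j<length b. a ! j \<le> b ! j"
    and j: "j < length b"
  shows "sort a ! j \<le> b ! j"
proof (rule ccontr)
  assume "\<not> ?thesis"
  then have gt: "b ! j < sort a ! j" by simp
  let ?P = "\<lambda>v. v \<le> b ! j"
  have "{k. k < length (sort a) \<and> ?P (sort a ! k)} \<subseteq> {..<j}"
  proof
    fix k assume k: "k \<in> {k. k < length (sort a) \<and> ?P (sort a ! k)}"
    show "k \<in> {..<j}"
    proof (rule ccontr)
      assume "k \<notin> {..<j}"
      then have "sort a ! j \<le> sort a ! k" using k by (intro sorted_nth_mono) auto
      then have "sort a ! j \<le> b ! j" using k by (blast intro: order.trans)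
      then show False using gt by simp
    qed
  qed
  then have "length (filter ?P (sort a)) \<le> j"
    unfolding length_filter_conv_card by (metis card_lessThan card_mono finite_lessThan)
  moreover have "{..j} \<subseteq> {k. k < length a \<and> ?P (a ! k)}"
  proof
    fix k assume "k \<in> {..j}"
    then have "a ! k \<le> b ! k" "b ! k \<le> b ! j" using le j b by (auto intro: sorted_nth_mono)
    then show "k \<in> {k. k < length a \<and> ?P (a ! k)}" using \<open>k \<in> {..j}\<close> j len by auto
  qed
  then have "Suc j \<le> length (filter ?P a)"
    unfolding length_filter_conv_card by (metis card_atMost card_mono finite_Collect_conjI finite_Collect_less_nat)
  moreover have "length (filter ?P (sort a)) = length (filter ?P a)"
    by (simp add: filter_sort)
  ultimately show False by linarith
qed

lemma prod_list_pos_iff: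
  fixes f :: "'a \<Rightarrow> 'b::linordered_idom"
  assumes "\<forall>x\<in>set xs. f x \<ge> 0"
  shows "(\<Prod>x\<leftarrow>xs. f x) > 0 \<longleftrightarrow> (\<forall>x\<in>set xs. f x > 0)"
  using assms by (induction xs) (auto simp: zero_less_mult_iff prod_list_nonneg)

lemma pX_nonneg:
  assumes "\<forall>d. p d \<ge> 0" "\<forall>w. q w \<ge> 0" "lam p > 0" "mu q > 0"
  shows "pX p q dbar k \<ge> 0"
  unfolding pX_def using assms
  by (intro sum_nonneg mult_nonneg_nonneg divide_nonneg_nonneg prod_list_nonneg) auto

text \<open>Each of the at most dbar - 1 cliques contributes at most wbar - 1 to k.\<close>
lemma pX_eq_0:
  assumes q_supp: "\<forall>w>wbar. q w = 0" and k: "k > dbar * wbar"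
  shows "pX p q dbar k = 0"
  unfolding pX_def
proof (intro sum.neutral ballI)
  fix d assume d: "d \<in> {1..dbar}"
  let ?W = "{ws. length ws = d - 1 \<and> (\<forall>w\<in>set ws. 1 \<le> w \<and> w \<le> k + 1) \<and> (\<Sum>w\<leftarrow>ws. w - 1) = k}"
  have "(\<Prod>w\<leftarrow>ws. real w * q w) = 0" if ws: "ws \<in> ?W" for ws
  proof (rule ccontr)
    assume "(\<Prod>w\<leftarrow>ws. real w * q w) \<noteq> 0"
    then have "q w \<noteq> 0" if "w \<in> set ws" for w using that by (auto simp: prod_list_zero_iff)
    then have "\<forall>w\<in>set ws. w \<le> wbar" using q_supp by (meson not_le)
    then have "(\<Sum>w\<leftarrow>ws. w - 1) \<le> (\<Sum>w\<leftarrow>ws. wbar)" by (intro sum_list_mono) auto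
    also have "\<dots> = length ws * wbar" by (simp add: sum_list_triv)
    also have "\<dots> \<le> dbar * wbar" using ws d by (intro mult_right_mono) auto
    finally show False using ws k by simp
  qed
  then show "real d * p d / lam p * (\<Sum>ws\<in>?W. (\<Prod>w\<leftarrow>ws. real w * q w) / mu q ^ (d - 1)) = 0"
    by simp
qed

lemma pX_pos_imp_le:
  assumes "\<forall>w>wbar. q w = 0" "pX p q dbar k > 0"
  shows "k \<le> dbar * wbar"
  using assms pX_eq_0[of wbar q dbar k p] by (cases "k \<le> dbar * wbar") auto

text \<open>Only finitely many lists of outside degrees carry positive weight, so the sum defining
  pE is a finite sum of nonnegative terms.\<close>
lemma pE_pos_iff:
  assumes nonneg: "\<forall>d. p d \<ge> 0" "\<forall>w. q w \<ge> 0" "lam p > 0" "mu q > 0"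
    and q_supp: "\<forall>w>wbar. q w = 0"
  shows "pE thr p q dbar l xs w > 0 \<longleftrightarrow>
    (\<exists>zs. length zs = w - 1 \<and> (\<forall>z\<in>set zs. pX p q dbar z > 0)
          \<and> card (clique_final thr zs) = l \<and> take l (sort zs) = xs)"
    (is "_ \<longleftrightarrow> (\<exists>zs. ?good zs)")
proof -
  define g where "g = (\<lambda>zs. (\<Prod>z\<leftarrow>zs. pX p q dbar z) *
    (if card (clique_final thr zs) = l \<and> take l (sort zs) = xs then 1 else (0::real)))"
  define S where "S = {zs::nat list. length zs = w - 1}"
  define T where "T = {zs. set zs \<subseteq> {..dbar * wbar} \<and> length zs = w - 1}"
  have prod: "(\<Prod>z\<leftarrow>zs. pX p q dbar z) > 0 \<longleftrightarrow> (\<forall>z\<in>set zs. pX p q dbar z > 0)" for zs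
    using pX_nonneg[OF nonneg] by (intro prod_list_pos_iff) simp
  have "(\<Prod>z\<leftarrow>zs. pX p q dbar z) \<ge> 0" for zs
    using pX_nonneg[OF nonneg] by (intro prod_list_nonneg) auto
  then have g_nonneg: "g zs \<ge> 0" for zs by (simp add: g_def)
  have g_pos: "g zs > 0 \<longleftrightarrow> (\<forall>z\<in>set zs. pX p q dbar z > 0)
      \<and> card (clique_final thr zs) = l \<and> take l (sort zs) = xs" for zs
    using prod[of zs] by (simp add: g_def)
  have "finite T" unfolding T_def by (rule finite_lists_length_eq) simp
  have good_T: "zs \<in> T" if "zs \<in> S" "\<forall>z\<in>set zs. pX p q dbar z > 0" for zs
    using that pX_pos_imp_le[OF q_supp] unfolding S_def T_def by auto
  have "g zs = 0" if "zs \<in> S - T" for zs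
    using that good_T[of zs] g_pos[of zs] g_nonneg[of zs] by auto
  then have "pE thr p q dbar l xs w = infsum g (S \<inter> T)"
    unfolding pE_def g_def[symmetric] S_def[symmetric] by (intro infsum_cong_neutral) auto
  also have "\<dots> = sum g (S \<inter> T)" using \<open>finite T\<close> by simp
  finally have pE: "pE thr p q dbar l xs w = sum g (S \<inter> T)" .
  show ?thesis
  proof
    assume "pE thr p q dbar l xs w > 0"
    then have "sum g (S \<inter> T) \<noteq> 0" unfolding pE by simp
    then obtain zs where "zs \<in> S \<inter> T" "g zs \<noteq> 0"
      by (rule sum.not_neutral_contains_not_neutral)
    then have "?good zs" using g_pos[of zs] g_nonneg[of zs] unfolding S_def by simp
    then show "\<exists>zs. ?good zs" ..
  next
    assume "\<exists>zs. ?good zs"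
    then obtain zs where zs: "?good zs" by blast
    then have "zs \<in> S \<inter> T" using good_T[of zs] unfolding S_def by blast
    have "0 < g zs" using zs g_pos[of zs] by blast
    also have "g zs \<le> sum g (S \<inter> T)"
      using \<open>finite T\<close> \<open>zs \<in> S \<inter> T\<close> g_nonneg by (intro member_le_sum) auto
    finally show "pE thr p q dbar l xs w > 0" unfolding pE .
  qed
qed

lemma pE_pos_lower:
  assumes nonneg: "\<forall>d. p d \<ge> 0" "\<forall>w. q w \<ge> 0" "lam p > 0" "mu q > 0"
    and q_supp: "\<forall>w>wbar. q w = 0" and thr: "thr > 0"
    and pE: "pE thr p q dbar l xs w > 0"
    and ys: "length ys = length xs" "\<forall>j<length xs. ys ! j \<le> xs ! j"
      "\<forall>y\<in>set ys. pX p q dbar y > 0"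
  shows "pE thr p q dbar l (sort ys) w > 0"
proof -
  note iff = pE_pos_iff[OF nonneg q_supp]
  obtain zs where zs: "length zs = w - 1" "\<forall>z\<in>set zs. pX p q dbar z > 0"
    "card (clique_final thr zs) = l" "take l (sort zs) = xs"
    using pE[unfolded iff] by blast
  define s where "s = sort zs"
  have "mset s = mset zs" unfolding s_def by simp
  then obtain f where f: "f permutes {..<length zs}" "permute_list f zs = s"
    by (rule mset_eq_permutation)
  have card_s: "card (clique_final thr s) = l"
    using card_clique_final_permute_list[OF f(1)] f(2) zs(3) by simp
  have "l \<le> length s"
    using card_mono[OF _ clique_final_subset[of thr s]] card_s by simp
  have xs: "xs = take l s" using zs(4) unfolding s_def by simp
  then have "length xs = l" "sorted xs" using \<open>l \<le> length s\<close> by (simp_all add: s_def sorted_wrt_take)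
  have "sort ys ! j \<le> s ! j" if "j < l" for j
  proof -
    have "sort ys ! j \<le> xs ! j"
      using sort_nth_le[OF ys(1) \<open>sorted xs\<close> ys(2)] that \<open>length xs = l\<close> by simp
    also have "xs ! j = s ! j" using xs that by simp
    finally show ?thesis .
  qed
  then have lower: "sorted (sort ys @ drop l s)" "clique_final thr (sort ys @ drop l s) = {..<l}"
    using clique_final_lower_prefix[OF thr _ card_s] ys(1) \<open>length xs = l\<close> by (simp_all add: s_def)
  define zs' where "zs' = sort ys @ drop l s"
  have "length zs' = w - 1"
    using \<open>l \<le> length s\<close> ys(1) \<open>length xs = l\<close> zs(1) unfolding zs'_def s_def by simp
  moreover have "\<forall>z\<in>set zs'. pX p q dbar z > 0"
    using ys(3) zs(2) set_drop_subset[of l s] unfolding zs'_def s_def by auto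
  moreover have "card (clique_final thr zs') = l"
    using lower(2) unfolding zs'_def by simp
  moreover have "take l (sort zs') = sort ys"
    using lower(1) ys(1) \<open>length xs = l\<close> unfolding zs'_def by (simp add: sorted_sort_id)
  ultimately show ?thesis unfolding iff by blast
qed

lemma map_fst_eq_nth:
  assumes "map fst cs' = map fst cs" "i < length cs"
  shows "fst (cs' ! i) = fst (cs ! i)"
  using assms by (metis map_eq_imp_length_eq nth_map)

lemma is_config_update:
  assumes "is_config dbar wbar cs" and fst: "map fst cs' = map fst cs"
    and "\<And>i. i < length cs \<Longrightarrow> length (snd (cs' ! i)) = length (snd (cs ! i))
      \<and> sorted (snd (cs' ! i)) \<and> (\<forall>y\<in>set (snd (cs' ! i)). y \<le> dbar * wbar)"
  shows "is_config dbar wbar cs'"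
  using assms map_eq_imp_length_eq[OF fst] map_fst_eq_nth[OF fst]
  unfolding is_config_def all_set_conv_all_nth by (auto simp: case_prod_beta)

lemma config_pos_update:
  assumes "config_pos thr p q dbar x cs" and fst: "map fst cs' = map fst cs"
    and "\<And>i. i < length cs \<Longrightarrow> pE thr p q dbar (length (snd (cs ! i))) (snd (cs ! i)) (fst (cs ! i)) > 0
      \<Longrightarrow> pE thr p q dbar (length (snd (cs' ! i))) (snd (cs' ! i)) (fst (cs ! i)) > 0"
  shows "config_pos thr p q dbar x cs'"
proof -
  have "map (\<lambda>(w, xs). w - 1) cs' = map (\<lambda>(w, xs). w - (1::nat)) cs"
    using map_eq_imp_length_eq[OF fst] map_fst_eq_nth[OF fst]
    by (intro nth_equalityI) (simp_all add: case_prod_beta)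
  then show ?thesis
    using assms map_eq_imp_length_eq[OF fst] map_fst_eq_nth[OF fst]
    unfolding config_pos_def all_set_conv_all_nth by (auto simp: case_prod_beta)
qed

theorem lemma3:
  fixes p q :: "nat \<Rightarrow> real" and dbar wbar x :: nat and thr :: real
    and cs :: "(nat \<times> nat list) list" and ys :: "nat list list"
  assumes p_nonneg: "\<forall>d. p d \<ge> 0" and p_sum: "p sums 1"
    and q_nonneg: "\<forall>w. q w \<ge> 0" and q_sum: "q sums 1"
    and lam_pos: "lam p > 0" and mu_pos: "mu q > 0"
    and dbar: "dbar \<ge> 1" and wbar: "wbar \<ge> 1"
    and p_supp: "\<forall>d>dbar. p d = 0" and q_supp: "\<forall>w>wbar. q w = 0"
    and p0: "p 0 = 0" and q0: "q 0 = 0" and q1: "q 1 = 0"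
    and thr: "0 < thr" "thr < 1"
    and x: "0 < x" "x \<le> dbar * wbar"
    and cfg: "is_config dbar wbar cs" and cfg_pos: "config_pos thr p q dbar x cs"
    and ys_len: "length ys = length cs"
    and ys_len': "\<forall>i<length cs. length (ys ! i) = length (snd (cs ! i))"
    and ys_le: "\<forall>i<length cs. \<forall>j<length (ys ! i). ys ! i ! j \<le> snd (cs ! i) ! j"
    and ys_pos: "\<forall>i<length cs. \<forall>j<length (ys ! i). pX p q dbar (ys ! i ! j) > 0"
  shows "is_config dbar wbar (map (\<lambda>i. (fst (cs ! i), sort (ys ! i))) [0..<length cs])
       \<and> config_pos thr p q dbar x (map (\<lambda>i. (fst (cs ! i), sort (ys ! i))) [0..<length cs])"
proof -
  define cs' where "cs' = map (\<lambda>i. (fst (cs ! i), sort (ys ! i))) [0..<length cs]"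
  have fst: "map fst cs' = map fst cs" unfolding cs'_def by (rule nth_equalityI) simp_all
  have new: "cs' ! i = (fst (cs ! i), sort (ys ! i))" if "i < length cs" for i
    using that unfolding cs'_def by simp
  have pos: "\<forall>y\<in>set (ys ! i). pX p q dbar y > 0" if "i < length cs" for i
    using ys_pos that by (auto simp: in_set_conv_nth)
  have bound: "\<forall>y\<in>set (ys ! i). y \<le> dbar * wbar" if "i < length cs" for i
    using pos[OF that] by (auto intro: pX_pos_imp_le[OF q_supp])
  have lower: "pE thr p q dbar (length (snd (cs ! i))) (sort (ys ! i)) (fst (cs ! i)) > 0"
    if "i < length cs" "pE thr p q dbar (length (snd (cs ! i))) (snd (cs ! i)) (fst (cs ! i)) > 0" for i
    using pE_pos_lower[OF p_nonneg q_nonneg lam_pos mu_pos q_supp thr(1) that(2) _ _ pos[OF that(1)]]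
      ys_len' ys_le that(1) by simp
  have "is_config dbar wbar cs'"
    using cfg fst by (rule is_config_update) (simp add: new ys_len' bound)
  moreover have "config_pos thr p q dbar x cs'"
    using cfg_pos fst by (rule config_pos_update) (simp add: new ys_len' lower)
  ultimately show ?thesis unfolding cs'_def by simp
qed

end
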